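(* Let $G$ be a connected undirected graph with positive edge weights, Laplacian $\mathbf{L}$ and degree matrix $\mathbf{D}$, such that the second smallest eigenvalue of its normalised Laplacian $\mathbf{D}^{-1/2}\mathbf{L}\mathbf{D}^{-1/2}$ is $\nu_2$. Let $C\subseteq V$ be a set of vertices with $F=V\setminus C$ nonempty and $|C|\ge 2$, let $\mathbf{S}=\mathbf{Sc}(\mathbf{L},C)$ be the Schur complement of $\mathbf{L}$ onto $C$, and let $\mathbf{D_C}$ be the restriction of $\mathbf{D}$ to $C$ (the original degrees). Then $\lambda_2(\mathbf{D_C}^{-1/2}\mathbf{S}\mathbf{D_C}^{-1/2})\ge\nu_2$.
   Context: Writing $\mathbf{L}=\begin{pmatrix}\mathbf{F}&\mathbf{B}\\ \mathbf{B}^\top&\mathbf{C}\end{pmatrix}$ with blocks indexed by $F$ and $C$, the Schur complement is $\mathbf{Sc}(\mathbf{L},C)=\mathbf{C}-\mathbf{B}^\top\mathbf{F}^{-1}\mathbf{B}$. $\lambda_2(\cdot)$ denotes the second smallest eigenvalue of a symmetric matrix. *)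

theory Defs
  imports "Jordan_Normal_Form.DL_Submatrix" "Jordan_Normal_Form.Gauss_Jordan_Elimination"
    "Jordan_Normal_Form.Char_Poly" "HOL-Library.Multiset"
begin

text \<open>Weighted undirected graphs on the vertex set {0..<n}, given by a weight
  function w; an edge {i,j} is present iff w i j > 0.\<close>

definition weighted_graph :: "nat \<Rightarrow> (nat \<Rightarrow> nat \<Rightarrow> real) \<Rightarrow> bool" where
  "weighted_graph n w \<longleftrightarrow>
     (\<forall>i<n. \<forall>j<n. w i j = w j i \<and> w i j \<ge> 0) \<and> (\<forall>i<n. w i i = 0)"

definition graph_connected :: "nat \<Rightarrow> (nat \<Rightarrow> nat \<Rightarrow> real) \<Rightarrow> bool" where
  "graph_connected n w \<longleftrightarrow>
     (\<forall>u<n. \<forall>v<n. (u, v) \<in> {(i, j). i < n \<and> j < n \<and> w i j > 0}\<^sup>*)"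

definition wdeg :: "nat \<Rightarrow> (nat \<Rightarrow> nat \<Rightarrow> real) \<Rightarrow> nat \<Rightarrow> real" where
  "wdeg n w i = (\<Sum>j<n. w i j)"

definition degree_mat :: "nat \<Rightarrow> (nat \<Rightarrow> nat \<Rightarrow> real) \<Rightarrow> real mat" where
  "degree_mat n w = mat n n (\<lambda>(i, j). if i = j then wdeg n w i else 0)"

definition laplacian :: "nat \<Rightarrow> (nat \<Rightarrow> nat \<Rightarrow> real) \<Rightarrow> real mat" where
  "laplacian n w = degree_mat n w - mat n n (\<lambda>(i, j). w i j)"

definition diag_inv_sqrt :: "real mat \<Rightarrow> real mat" where
  "diag_inv_sqrt D = mat (dim_row D) (dim_col D)
      (\<lambda>(i, j). if i = j then 1 / sqrt (D $$ (i, i)) else 0)"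

text \<open>Schur complement of L onto C (blocks indexed by F = complement of C and C,
  in increasing order of indices): C-block minus B^T F^{-1} B.\<close>
definition schur_compl :: "real mat \<Rightarrow> nat set \<Rightarrow> real mat" where
  "schur_compl L C =
     (let F = {0..<dim_row L} - C;
          B = submatrix L F C
      in submatrix L C C - transpose_mat B * the (mat_inverse (submatrix L F F)) * B)"

definition sorted_eigenvalues :: "real mat \<Rightarrow> real list" where
  "sorted_eigenvalues A = sorted_list_of_multiset (proots (char_poly A))"

definition lambda2 :: "real mat \<Rightarrow> real" where
  "lambda2 A = sorted_eigenvalues A ! 1"

end

theory Submission
  imports Defs "Jordan_Normal_Form.Schur_Decomposition" "HOL-Combinatorics.Permutations"
begin

(* Write N = D^(-1/2) L D^(-1/2) and N_S = D_C^(-1/2) S D_C^(-1/2).  For x on C, let Z x be its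
   harmonic extension: equal to x on C and to -L_FF^-1 L_FC x on F.  Its Laplacian energy
   (Z x)^T L (Z x) is x^T S x.  Hence, with u = D_C^(1/2) x and t = D^(1/2) Z x, the normalised
   forms agree, t^T N t = u^T N_S u, and |t| >= |u| because t restricts to u on C.
   By Courant-Fischer, pick u in the span of the two lowest eigenvectors of N_S such that t is
   orthogonal to a lowest eigenvector of N; then
     nu2 |t|^2 <= t^T N t = u^T N_S u <= lambda2(N_S) |u|^2,
   and since t^T N t >= 0 this yields nu2 <= lambda2(N_S).  Relating lambda2, defined through the
   roots of the characteristic polynomial, to quadratic forms needs the spectral theorem for real
   symmetric matrices: their eigenvalues are real, and an orthonormal eigenbasis can be grown one
   vector at a time inside the orthogonal complement of the vectors found so far. *)

section \<open>Matrix algebra\<close>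

declare minus_carrier_mat[simp]

lemma mult_mat_vec_zero[simp]: "A \<in> carrier_mat n m \<Longrightarrow> A *\<^sub>v 0\<^sub>v m = (0\<^sub>v n :: 'a :: semiring_0 vec)"
  by (rule eq_vecI) (auto simp: scalar_prod_def)

lemma zero_mat_mult_vec[simp]: "v \<in> carrier_vec m \<Longrightarrow> 0\<^sub>m n m *\<^sub>v v = (0\<^sub>v n :: 'a :: semiring_0 vec)"
  by (rule eq_vecI) (auto simp: scalar_prod_def)

lemma smult_mat_mult_vec:
  "A \<in> carrier_mat n m \<Longrightarrow> v \<in> carrier_vec m \<Longrightarrow> (c \<cdot>\<^sub>m A) *\<^sub>v v = c \<cdot>\<^sub>v (A *\<^sub>v (v :: 'a :: comm_ring vec))"
  by (rule eq_vecI) (auto simp: scalar_prod_def sum_distrib_left ac_simps)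

lemma scalar_prod_transpose_mult_mult_vec:
  fixes A :: "'a :: comm_semiring_0 mat"
  assumes A: "A \<in> carrier_mat n m" and B: "B \<in> carrier_mat n p" and C: "C \<in> carrier_mat m q"
    and u: "u \<in> carrier_vec p" and v: "v \<in> carrier_vec q"
  shows "u \<bullet> ((B\<^sup>T * A * C) *\<^sub>v v) = (B *\<^sub>v u) \<bullet> (A *\<^sub>v (C *\<^sub>v v))"
proof -
  have ACv: "A *\<^sub>v (C *\<^sub>v v) \<in> carrier_vec n" using A C v by simp
  have "u \<bullet> ((B\<^sup>T * A * C) *\<^sub>v v) = u \<bullet> (B\<^sup>T *\<^sub>v (A *\<^sub>v (C *\<^sub>v v)))"
    using A B C v by (simp add: assoc_mult_mat_vec[of _ p n _ q])
  also have "\<dots> = (B\<^sup>T *\<^sub>v (A *\<^sub>v (C *\<^sub>v v))) \<bullet> u"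
    using B u ACv by (intro comm_scalar_prod[of _ p]) auto
  also have "\<dots> = (A *\<^sub>v (C *\<^sub>v v)) \<bullet> (B *\<^sub>v u)" by (rule transpose_vec_mult_scalar[OF B u ACv])
  also have "\<dots> = (B *\<^sub>v u) \<bullet> (A *\<^sub>v (C *\<^sub>v v))"
    using B u ACv by (intro comm_scalar_prod[of _ n]) auto
  finally show ?thesis .
qed

lemma symmetric_mat_scalar_prod_swap:
  fixes A :: "'a :: comm_semiring_0 mat"
  assumes A: "A \<in> carrier_mat n n" and sym: "A\<^sup>T = A" and x: "x \<in> carrier_vec n" and y: "y \<in> carrier_vec n"
  shows "x \<bullet> (A *\<^sub>v y) = y \<bullet> (A *\<^sub>v x)"
  using transpose_vec_mult_scalar[OF A y x] sym comm_scalar_prod[of "A *\<^sub>v x" n y] A x y by simp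

lemma quadratic_form_diff:
  fixes A :: "'a :: comm_ring_1 mat"
  assumes A: "A \<in> carrier_mat n n" and sym: "A\<^sup>T = A"
    and P: "P \<in> carrier_mat n p" and R: "R \<in> carrier_mat n r"
    and x: "x \<in> carrier_vec p" and y: "y \<in> carrier_vec r"
  shows "(P *\<^sub>v x - R *\<^sub>v y) \<bullet> (A *\<^sub>v (P *\<^sub>v x - R *\<^sub>v y))
       = x \<bullet> ((P\<^sup>T * A * P) *\<^sub>v x) - 2 * (y \<bullet> ((R\<^sup>T * A * P) *\<^sub>v x)) + y \<bullet> ((R\<^sup>T * A * R) *\<^sub>v y)"
proof -
  have Px: "P *\<^sub>v x \<in> carrier_vec n" and Ry: "R *\<^sub>v y \<in> carrier_vec n" using P R x y by auto
  have "(P *\<^sub>v x - R *\<^sub>v y) \<bullet> (A *\<^sub>v (P *\<^sub>v x - R *\<^sub>v y))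
     = (P *\<^sub>v x) \<bullet> (A *\<^sub>v (P *\<^sub>v x)) - (P *\<^sub>v x) \<bullet> (A *\<^sub>v (R *\<^sub>v y))
       - ((R *\<^sub>v y) \<bullet> (A *\<^sub>v (P *\<^sub>v x)) - (R *\<^sub>v y) \<bullet> (A *\<^sub>v (R *\<^sub>v y)))"
    using A Px Ry by (simp add: mult_minus_distrib_mat_vec minus_scalar_prod_distrib[of _ n]
        scalar_prod_minus_distrib[of _ n])
  also have "(P *\<^sub>v x) \<bullet> (A *\<^sub>v (R *\<^sub>v y)) = (R *\<^sub>v y) \<bullet> (A *\<^sub>v (P *\<^sub>v x))"
    by (rule symmetric_mat_scalar_prod_swap[OF A sym Px Ry])
  finally show ?thesis
    using scalar_prod_transpose_mult_mult_vec[OF A] P R x y by (simp add: algebra_simps)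
qed

lemma symmetric_congruence:
  fixes A P :: "'a :: comm_ring_1 mat"
  assumes A: "A \<in> carrier_mat k k" and P: "P \<in> carrier_mat k k" and "A\<^sup>T = A" "P\<^sup>T = P"
  shows "(P * A * P)\<^sup>T = P * A * P"
proof -
  have "(P * A * P)\<^sup>T = P\<^sup>T * (P * A)\<^sup>T" using A P by (intro transpose_mult) auto
  also have "(P * A)\<^sup>T = A\<^sup>T * P\<^sup>T" using A P by (intro transpose_mult) auto
  finally show ?thesis using assms by simp
qed

lemma inverse_of_symmetric_mat:
  fixes A :: "'a :: comm_ring_1 mat"
  assumes A: "A \<in> carrier_mat k k" and sym: "A\<^sup>T = A"
    and Ai: "Ai \<in> carrier_mat k k" and inv: "A * Ai = 1\<^sub>m k"
  shows "Ai\<^sup>T = Ai"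
proof -
  have left_inv: "Ai\<^sup>T * A = 1\<^sub>m k" using transpose_mult[OF A Ai] inv sym by simp
  have "Ai\<^sup>T = Ai\<^sup>T * (A * Ai)" using inv Ai by simp
  also have "\<dots> = (Ai\<^sup>T * A) * Ai" using A Ai by (intro assoc_mult_mat[symmetric]) auto
  finally show ?thesis using left_inv Ai by simp
qed

lemma mat_inverse_if_trivial_kernel:
  fixes A :: "'a :: field mat"
  assumes A: "A \<in> carrier_mat k k"
    and kernel: "\<And>y. y \<in> carrier_vec k \<Longrightarrow> A *\<^sub>v y = 0\<^sub>v k \<Longrightarrow> y = 0\<^sub>v k"
  shows "mat_inverse A \<noteq> None"
proof
  assume "mat_inverse A = None"
  then have "A \<notin> Units (ring_mat TYPE('a) k ())" by (rule mat_inverse(1)[OF A])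
  then have "det A = 0" using det_non_zero_imp_unit[OF A, where b = "()"] by blast
  then show False using det_0_iff_vec_prod_zero[OF A] kernel by blast
qed

lemma diagonal_mat_mult_vec:
  assumes "v \<in> carrier_vec n" "i < n"
  shows "(mat n n (\<lambda>(i, j). if i = j then f i else 0) *\<^sub>v v) $ i = f i * v $ i"
proof -
  have "(mat n n (\<lambda>(i, j). if i = j then f i else 0) *\<^sub>v v) $ i = (\<Sum>j<n. (if i = j then f i else 0) * v $ j)"
    using assms by (simp add: scalar_prod_def atLeast0LessThan)
  also have "\<dots> = (\<Sum>j<n. if i = j then f i * v $ j else 0)" by (rule sum.cong) auto
  finally show ?thesis using assms(2) by simp
qed

section \<open>Spectral theorem for real symmetric matrices\<close>

interpretation of_real_poly_hom: map_poly_inj_idom_hom "of_real :: real \<Rightarrow> complex" ..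

lemma conjugate_of_real_mat_mult_vec:
  fixes M :: "real mat"
  assumes "M \<in> carrier_mat k k" "v \<in> carrier_vec k"
  shows "conjugate (map_mat complex_of_real M *\<^sub>v v) = map_mat complex_of_real M *\<^sub>v conjugate v"
  by (rule eq_vecI) (use assms in \<open>auto simp: scalar_prod_def\<close>)

lemma symmetric_mat_eigenvalue_real:
  fixes M :: "real mat"
  assumes M: "M \<in> carrier_mat k k" and sym: "M\<^sup>T = M"
    and ev: "eigenvalue (map_mat complex_of_real M) a"
  shows "a \<in> \<real>"
proof -
  let ?M = "map_mat complex_of_real M"
  have M': "?M \<in> carrier_mat k k" and sym': "?M\<^sup>T = ?M"
    using M sym by (auto simp: map_mat_transpose)
  obtain v where v: "v \<in> carrier_vec k" "v \<noteq> 0\<^sub>v k" "?M *\<^sub>v v = a \<cdot>\<^sub>v v"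
    using ev M' unfolding eigenvalue_def eigenvector_def by auto
  have cv: "conjugate v \<in> carrier_vec k" using v(1) by simp
  have "a * (v \<bullet>c v) = (?M *\<^sub>v v) \<bullet>c v"
    using v by (simp add: smult_scalar_prod_distrib[of _ k])
  also have "\<dots> = v \<bullet> (?M *\<^sub>v conjugate v)"
    using transpose_vec_mult_scalar[OF M' cv v(1)] sym' by (simp add: comm_scalar_prod[of _ k])
  also have "\<dots> = conjugate a * (v \<bullet>c v)"
    using v by (simp add: conjugate_of_real_mat_mult_vec[OF M v(1), symmetric] conjugate_smult_vec
        scalar_prod_smult_distrib[of _ k])
  finally have "a = conjugate a"
    using conjugate_square_greater_0_vec[OF v(1)] v(2) by auto
  then show ?thesis by (simp add: Reals_cnj_iff)
qed

lemma symmetric_mat_char_poly_splits: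
  fixes M :: "real mat"
  assumes M: "M \<in> carrier_mat k k" and sym: "M\<^sup>T = M"
  shows "\<exists>es. char_poly M = (\<Prod>e\<leftarrow>es. [:-e, 1:])"
proof -
  let ?M = "map_mat complex_of_real M"
  have M': "?M \<in> carrier_mat k k" using M by simp
  obtain as where as: "char_poly ?M = (\<Prod>a\<leftarrow>as. [:-a, 1:])"
    using char_poly_factorized[OF M'] by blast
  have "a \<in> \<real>" if "a \<in> set as" for a
    using symmetric_mat_eigenvalue_real[OF M sym] linear_poly_root[OF that]
      eigenvalue_root_char_poly[OF M'] as by simp
  then have as_real: "map (of_real \<circ> Re) as = as"
    by (intro map_idI) (auto elim: Reals_cases)
  have "map_poly of_real (char_poly M) = char_poly ?M"
    by (rule of_real_hom.char_poly_hom[OF M, symmetric])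
  also have "\<dots> = (\<Prod>a\<leftarrow>map (of_real \<circ> Re) as. [:-a, 1:])"
    unfolding as as_real ..
  also have "\<dots> = map_poly of_real (\<Prod>e\<leftarrow>map Re as. [:-e, 1:])"
    by (simp add: of_real_poly_hom.hom_prod_list o_def)
  finally have "map_poly complex_of_real (char_poly M) = map_poly of_real (\<Prod>e\<leftarrow>map Re as. [:-e, 1:])" .
  then show ?thesis by (blast dest: of_real_poly_hom.injectivity)
qed

lemma proots_prod_linear_factors: "proots (\<Prod>e\<leftarrow>es. [:-e, 1:]) = mset (es :: 'a :: idom list)"
proof (induction es)
  case (Cons a es)
  have "(\<Prod>e\<leftarrow>es. [:-e, 1:]) \<noteq> (0 :: 'a poly)" by auto
  then show ?case using Cons.IH by (simp add: proots_mult del: mult_pCons_left)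
qed simp

definition mat_trace :: "'a :: comm_ring_1 mat \<Rightarrow> 'a" where
  "mat_trace A = (\<Sum>i<dim_row A. A $$ (i, i))"

lemma mat_trace_mult_comm:
  assumes A: "A \<in> carrier_mat n m" and B: "B \<in> carrier_mat m n"
  shows "mat_trace (A * B) = mat_trace (B * A)"
proof -
  have "mat_trace (A * B) = (\<Sum>i<n. \<Sum>j<m. A $$ (i, j) * B $$ (j, i))"
    unfolding mat_trace_def using A B by (auto simp: scalar_prod_def atLeast0LessThan intro!: sum.cong)
  also have "\<dots> = (\<Sum>j<m. \<Sum>i<n. B $$ (j, i) * A $$ (i, j))"
    by (subst sum.swap) (simp add: mult.commute)
  also have "\<dots> = mat_trace (B * A)"
    unfolding mat_trace_def using A B by (auto simp: scalar_prod_def atLeast0LessThan intro!: sum.cong)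
  finally show ?thesis .
qed

lemma mat_trace_similar:
  assumes "similar_mat A B"
  shows "mat_trace A = mat_trace B"
proof -
  obtain n P Q where carr: "{A, B, P, Q} \<subseteq> carrier_mat n n" and QP: "Q * P = 1\<^sub>m n"
    and ABPQ: "A = P * B * Q"
    using similar_matD[OF assms] by blast
  then have cs: "A \<in> carrier_mat n n" "B \<in> carrier_mat n n" "P \<in> carrier_mat n n" "Q \<in> carrier_mat n n"
    by auto
  have "mat_trace A = mat_trace (P * (B * Q))" using ABPQ cs by simp
  also have "\<dots> = mat_trace ((B * Q) * P)" using cs by (intro mat_trace_mult_comm) auto
  also have "(B * Q) * P = B * (Q * P)" using cs by (intro assoc_mult_mat) auto
  finally show ?thesis using QP cs(2) by simp
qed

lemma mat_trace_add: "A \<in> carrier_mat n n \<Longrightarrow> B \<in> carrier_mat n n \<Longrightarrow> mat_trace (A + B) = mat_trace A + mat_trace B"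
  unfolding mat_trace_def by (simp add: sum.distrib)

lemma mat_trace_minus: "A \<in> carrier_mat n n \<Longrightarrow> B \<in> carrier_mat n n \<Longrightarrow> mat_trace (A - B) = mat_trace A - mat_trace B"
  unfolding mat_trace_def by (simp add: sum_subtractf)

lemma mat_trace_smult: "A \<in> carrier_mat n n \<Longrightarrow> mat_trace (c \<cdot>\<^sub>m A) = c * mat_trace A"
  unfolding mat_trace_def by (simp add: sum_distrib_left)

lemma mat_trace_one: "mat_trace (1\<^sub>m n) = of_nat n"
  unfolding mat_trace_def by simp

text \<open>A triangular form has the roots of the characteristic polynomial on its diagonal, so a
  nonzero trace forces a nonzero root.\<close>

lemma symmetric_mat_nonzero_eigenvalue:
  fixes M :: "real mat"
  assumes M: "M \<in> carrier_mat k k" and sym: "M\<^sup>T = M" and tr: "mat_trace M \<noteq> 0"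
  shows "\<exists>l x. l \<noteq> 0 \<and> eigenvector M x l"
proof -
  obtain es where es: "char_poly M = (\<Prod>e\<leftarrow>es. [:-e, 1:])"
    using symmetric_mat_char_poly_splits[OF M sym] by blast
  define B where "B = schur_upper_triangular M es"
  note B = schur_upper_triangular[OF M es, folded B_def]
  have "mat_trace B \<noteq> 0" using tr mat_trace_similar[OF B(3)] by simp
  then obtain i where i: "i < k" "B $$ (i, i) \<noteq> 0"
    unfolding mat_trace_def using B(1) by (auto elim: sum.not_neutral_contains_not_neutral)
  have "char_poly M = (\<Prod>a\<leftarrow>diag_mat B. [:-a, 1:])"
    using char_poly_similar[OF B(3)] char_poly_upper_triangular[OF B(1,2)] by simp
  moreover have "B $$ (i, i) \<in> set (diag_mat B)" using i B(1) unfolding diag_mat_def by auto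
  ultimately have "poly (char_poly M) (B $$ (i, i)) = 0" by (simp add: linear_poly_root)
  then have "eigenvalue M (B $$ (i, i))" using eigenvalue_root_char_poly[OF M] by simp
  then show ?thesis using i(2) unfolding eigenvalue_def by blast
qed

definition orthonormal :: "nat \<Rightarrow> real vec list \<Rightarrow> bool" where
  "orthonormal k vs \<longleftrightarrow> set vs \<subseteq> carrier_vec k \<and>
     (\<forall>i<length vs. \<forall>j<length vs. vs ! i \<bullet> vs ! j = (if i = j then 1 else 0))"

lemma orthonormal_snoc:
  assumes vs: "orthonormal k vs" and u: "u \<in> carrier_vec k" "u \<bullet> u = 1"
    and orth: "\<forall>i<length vs. vs ! i \<bullet> u = 0"
  shows "orthonormal k (vs @ [u])"
  unfolding orthonormal_def
proof (intro conjI allI impI)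
  show "set (vs @ [u]) \<subseteq> carrier_vec k" using vs u unfolding orthonormal_def by auto
  fix i j assume i: "i < length (vs @ [u])" and j: "j < length (vs @ [u])"
  have vs_carrier: "vs ! i \<in> carrier_vec k" if "i < length vs" for i
    using vs that nth_mem unfolding orthonormal_def by blast
  consider "i < length vs" "j < length vs" | "i < length vs" "j = length vs"
    | "i = length vs" "j < length vs" | "i = length vs" "j = length vs"
    using i j by fastforce
  then show "(vs @ [u]) ! i \<bullet> (vs @ [u]) ! j = (if i = j then 1 else 0)"
  proof cases
    case 3
    then show ?thesis using orth u(1) vs_carrier comm_scalar_prod[of u k "vs ! j"]
      by (simp add: nth_append)
  qed (use vs u orth in \<open>auto simp: nth_append orthonormal_def\<close>)
qed

lemma transpose_mat_of_cols_mult_vec: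
  assumes "set vs \<subseteq> carrier_vec k" "y \<in> carrier_vec k" "i < length vs"
  shows "((mat_of_cols k vs)\<^sup>T *\<^sub>v y) $ i = vs ! i \<bullet> y"
proof -
  have "vs ! i \<in> carrier_vec k" using assms(1,3) nth_mem by blast
  then show ?thesis using assms by simp
qed

lemma transpose_mat_of_cols_mult_vec_eq_0_iff:
  assumes "set vs \<subseteq> carrier_vec k" "y \<in> carrier_vec k"
  shows "(mat_of_cols k vs)\<^sup>T *\<^sub>v y = 0\<^sub>v (length vs) \<longleftrightarrow> (\<forall>i<length vs. vs ! i \<bullet> y = 0)"
  using transpose_mat_of_cols_mult_vec[OF assms] by (auto simp: vec_eq_iff)

lemma orthonormal_mat_of_cols:
  assumes "orthonormal k vs"
  shows "(mat_of_cols k vs)\<^sup>T * mat_of_cols k vs = 1\<^sub>m (length vs)"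
proof (rule eq_matI)
  fix i j assume "i < dim_row (1\<^sub>m (length vs))" "j < dim_col (1\<^sub>m (length vs))"
  then have ij: "i < length vs" "j < length vs" by auto
  then have "vs ! i \<in> carrier_vec k" "vs ! j \<in> carrier_vec k"
    using assms nth_mem unfolding orthonormal_def by blast+
  then show "((mat_of_cols k vs)\<^sup>T * mat_of_cols k vs) $$ (i, j) = 1\<^sub>m (length vs) $$ (i, j)"
    using assms ij unfolding orthonormal_def by simp
qed auto

lemma complement_projector:
  fixes V :: "real mat"
  assumes V: "V \<in> carrier_mat k m" and VtV: "V\<^sup>T * V = 1\<^sub>m m"
  defines "Q \<equiv> 1\<^sub>m k - V * V\<^sup>T"
  shows "Q \<in> carrier_mat k k" "Q\<^sup>T = Q" "V\<^sup>T * Q = 0\<^sub>m m k" "mat_trace Q = real k - real m"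
    and "\<And>y. y \<in> carrier_vec k \<Longrightarrow> V\<^sup>T *\<^sub>v y = 0\<^sub>v m \<Longrightarrow> Q *\<^sub>v y = y"
proof -
  have Vt: "V\<^sup>T \<in> carrier_mat m k" using V by simp
  show "Q \<in> carrier_mat k k" unfolding Q_def using V by simp
  have "Q\<^sup>T = (1\<^sub>m k)\<^sup>T - (V * V\<^sup>T)\<^sup>T" unfolding Q_def using V by (intro transpose_minus) auto
  then show "Q\<^sup>T = Q" unfolding Q_def using V by (simp add: transpose_mult)
  have "V\<^sup>T * Q = V\<^sup>T * 1\<^sub>m k - V\<^sup>T * (V * V\<^sup>T)"
    unfolding Q_def using V by (intro mult_minus_distrib_mat) auto
  also have "V\<^sup>T * (V * V\<^sup>T) = (V\<^sup>T * V) * V\<^sup>T" using V by simp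
  finally show "V\<^sup>T * Q = 0\<^sub>m m k" using VtV Vt by simp
  have "mat_trace (V * V\<^sup>T) = mat_trace (V\<^sup>T * V)" using V by (intro mat_trace_mult_comm) auto
  then show "mat_trace Q = real k - real m"
    unfolding Q_def using V VtV mat_trace_minus[of "1\<^sub>m k" k "V * V\<^sup>T"] by (simp add: mat_trace_one)
  fix y assume y: "y \<in> carrier_vec k" "V\<^sup>T *\<^sub>v y = 0\<^sub>v m"
  have "Q *\<^sub>v y = y - (V * V\<^sup>T) *\<^sub>v y"
    unfolding Q_def using V y by (subst minus_mult_distrib_mat_vec) auto
  then show "Q *\<^sub>v y = y" using V y by simp
qed

text \<open>With Q the projector onto the complement, N = QMQ + cQ has trace 1 for suitable c.
  An eigenvector of N for a nonzero eigenvalue lies in the complement, where N acts as M + c.\<close>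

lemma symmetric_mat_eigenvector_in_complement:
  fixes M V :: "real mat"
  assumes M: "M \<in> carrier_mat k k" and sym: "M\<^sup>T = M"
    and V: "V \<in> carrier_mat k m" and VtV: "V\<^sup>T * V = 1\<^sub>m m" and m: "m < k"
    and invariant: "\<And>y. y \<in> carrier_vec k \<Longrightarrow> V\<^sup>T *\<^sub>v y = 0\<^sub>v m \<Longrightarrow> V\<^sup>T *\<^sub>v (M *\<^sub>v y) = 0\<^sub>v m"
  shows "\<exists>x l. eigenvector M x l \<and> V\<^sup>T *\<^sub>v x = 0\<^sub>v m"
proof -
  define Q where "Q = 1\<^sub>m k - V * V\<^sup>T"
  note Q = complement_projector[OF V VtV, folded Q_def]
  define c where "c = (1 - mat_trace (Q * M * Q)) / (real k - real m)"
  define N where "N = Q * M * Q + c \<cdot>\<^sub>m Q"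
  have N: "N \<in> carrier_mat k k" unfolding N_def using Q(1) M by simp
  have "mat_trace N = 1"
    unfolding N_def c_def using Q(1,4) M m by (simp add: mat_trace_add[of _ k] mat_trace_smult[of _ k])
  moreover have "N\<^sup>T = N"
  proof -
    have "(c \<cdot>\<^sub>m Q)\<^sup>T = c \<cdot>\<^sub>m Q\<^sup>T" by (rule eq_matI) auto
    then show ?thesis
      unfolding N_def using Q(1,2) M sym by (simp add: transpose_add[of _ k k] transpose_mult[of _ k k _ k])
  qed
  ultimately obtain l x where l: "l \<noteq> 0" and "eigenvector N x l"
    using symmetric_mat_nonzero_eigenvalue[OF N] by auto
  then have x: "x \<in> carrier_vec k" "x \<noteq> 0\<^sub>v k" "N *\<^sub>v x = l \<cdot>\<^sub>v x"
    using N unfolding eigenvector_def by auto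
  have N_apply: "N *\<^sub>v z = Q *\<^sub>v (M *\<^sub>v (Q *\<^sub>v z)) + c \<cdot>\<^sub>v (Q *\<^sub>v z)" if "z \<in> carrier_vec k" for z
    unfolding N_def using Q(1) M that
    by (subst add_mult_distrib_mat_vec[of _ k k]) (auto simp: smult_mat_mult_vec[of _ k k] assoc_mult_mat_vec[of _ k k _ k])
  have VtQ: "V\<^sup>T *\<^sub>v (Q *\<^sub>v z) = 0\<^sub>v m" if "z \<in> carrier_vec k" for z
    using Q(1,3) V that by (simp flip: assoc_mult_mat_vec)
  have "l \<cdot>\<^sub>v (V\<^sup>T *\<^sub>v x) = V\<^sup>T *\<^sub>v (N *\<^sub>v x)" using V x by (simp add: mult_mat_vec)
  also have "\<dots> = 0\<^sub>v m"
    using V Q(1) M x(1) by (simp add: N_apply mult_add_distrib_mat_vec mult_mat_vec VtQ vec_eq_iff)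
  finally have Vtx: "V\<^sup>T *\<^sub>v x = 0\<^sub>v m" using l V x(1) by (auto simp: vec_eq_iff)
  have Mx: "M *\<^sub>v x \<in> carrier_vec k" using M x(1) by simp
  have "l \<cdot>\<^sub>v x = M *\<^sub>v x + c \<cdot>\<^sub>v x"
    using x(1,3) N_apply[OF x(1)] Q(5)[OF x(1) Vtx] Q(5)[OF Mx invariant[OF x(1) Vtx]] by simp
  then have "M *\<^sub>v x = (l - c) \<cdot>\<^sub>v x" using M x(1) by (auto simp: vec_eq_iff algebra_simps)
  then show ?thesis using M x(1,2) Vtx unfolding eigenvector_def by auto
qed

lemma symmetric_mat_eigenvector_scalar_prod:
  fixes M :: "real mat"
  assumes M: "M \<in> carrier_mat k k" and sym: "M\<^sup>T = M"
    and v: "v \<in> carrier_vec k" "M *\<^sub>v v = e \<cdot>\<^sub>v v" and x: "x \<in> carrier_vec k"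
  shows "v \<bullet> (M *\<^sub>v x) = e * (v \<bullet> x)"
  using transpose_vec_mult_scalar[OF M x v(1)] sym v x by simp

lemma symmetric_mat_orthonormal_eigenvectors:
  fixes M :: "real mat"
  assumes M: "M \<in> carrier_mat k k" and sym: "M\<^sup>T = M"
  shows "m \<le> k \<Longrightarrow> \<exists>vs es. length vs = m \<and> length es = m \<and> orthonormal k vs \<and>
           (\<forall>i<m. M *\<^sub>v vs ! i = es ! i \<cdot>\<^sub>v vs ! i)"
proof (induction m)
  case 0
  show ?case by (intro exI[of _ "[]"]) (simp add: orthonormal_def)
next
  case (Suc m)
  then obtain vs es where vs: "length vs = m" "length es = m" "orthonormal k vs"
    and eig: "\<forall>i<m. M *\<^sub>v vs ! i = es ! i \<cdot>\<^sub>v vs ! i" by auto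
  have vs_carrier: "set vs \<subseteq> carrier_vec k" using vs(3) unfolding orthonormal_def by simp
  define V where "V = mat_of_cols k vs"
  have V: "V \<in> carrier_mat k m" unfolding V_def using mat_of_cols_carrier(1)[of k vs] vs(1) by simp
  have VtV: "V\<^sup>T * V = 1\<^sub>m m" unfolding V_def using orthonormal_mat_of_cols[OF vs(3)] vs(1) by simp
  have orth_iff: "V\<^sup>T *\<^sub>v y = 0\<^sub>v m \<longleftrightarrow> (\<forall>i<m. vs ! i \<bullet> y = 0)" if "y \<in> carrier_vec k" for y
    unfolding V_def using transpose_mat_of_cols_mult_vec_eq_0_iff[OF vs_carrier that] vs(1) by simp
  have "V\<^sup>T *\<^sub>v (M *\<^sub>v y) = 0\<^sub>v m" if y: "y \<in> carrier_vec k" "V\<^sup>T *\<^sub>v y = 0\<^sub>v m" for y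
    using symmetric_mat_eigenvector_scalar_prod[OF M sym _ _ y(1)] eig vs_carrier vs(1) y M
      orth_iff nth_mem by (simp add: subset_iff)
  then obtain x l where x: "eigenvector M x l" "V\<^sup>T *\<^sub>v x = 0\<^sub>v m"
    using symmetric_mat_eigenvector_in_complement[OF M sym V VtV] Suc.prems by auto
  then have x: "x \<in> carrier_vec k" "x \<noteq> 0\<^sub>v k" "M *\<^sub>v x = l \<cdot>\<^sub>v x" "\<forall>i<m. vs ! i \<bullet> x = 0"
    using M orth_iff unfolding eigenvector_def by auto
  define u where "u = (1 / sqrt (x \<bullet> x)) \<cdot>\<^sub>v x"
  have "x \<bullet> x > 0" using conjugate_square_greater_0_vec[OF x(1)] x(2) by simp
  then have u: "u \<in> carrier_vec k" "u \<bullet> u = 1" "M *\<^sub>v u = l \<cdot>\<^sub>v u" "\<forall>i<m. vs ! i \<bullet> u = 0"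
    unfolding u_def using x M vs_carrier vs(1) nth_mem
    by (auto simp: mult_mat_vec smult_smult_assoc power2_eq_square[symmetric] subset_iff)
  show ?case
  proof (intro exI conjI)
    show "orthonormal k (vs @ [u])" using orthonormal_snoc[OF vs(3) u(1,2)] u(4) vs(1) by simp
    show "\<forall>i<Suc m. M *\<^sub>v (vs @ [u]) ! i = (es @ [l]) ! i \<cdot>\<^sub>v (vs @ [u]) ! i"
      using eig u(3) vs by (auto simp: nth_append less_Suc_eq)
  qed (use vs in auto)
qed

lemma orthogonal_mat_scalar_prod:
  fixes V :: "real mat"
  assumes V: "V \<in> carrier_mat k k" and VVt: "V * V\<^sup>T = 1\<^sub>m k"
    and x: "x \<in> carrier_vec k" and y: "y \<in> carrier_vec k"
  shows "(V\<^sup>T *\<^sub>v x) \<bullet> (V\<^sup>T *\<^sub>v y) = x \<bullet> y"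
proof -
  have "(V\<^sup>T *\<^sub>v x) \<bullet> (V\<^sup>T *\<^sub>v y) = x \<bullet> (V *\<^sub>v (V\<^sup>T *\<^sub>v y))"
    using V x y by (intro transpose_vec_mult_scalar) auto
  also have "\<dots> = x \<bullet> y" using V y VVt by (simp flip: assoc_mult_mat_vec)
  finally show ?thesis .
qed

lemma orthonormal_basis_quadratic_form:
  fixes M :: "real mat"
  assumes M: "M \<in> carrier_mat k k" and sym: "M\<^sup>T = M"
    and vs: "length vs = k" "orthonormal k vs" and eig: "\<forall>i<k. M *\<^sub>v vs ! i = es ! i \<cdot>\<^sub>v vs ! i"
    and x: "x \<in> carrier_vec k"
  shows "x \<bullet> x = (\<Sum>i<k. (vs ! i \<bullet> x)\<^sup>2)" and "x \<bullet> (M *\<^sub>v x) = (\<Sum>i<k. es ! i * (vs ! i \<bullet> x)\<^sup>2)"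
proof -
  define V where "V = mat_of_cols k vs"
  have vs_carrier: "set vs \<subseteq> carrier_vec k" using vs(2) unfolding orthonormal_def by simp
  have V: "V \<in> carrier_mat k k" unfolding V_def using mat_of_cols_carrier(1)[of k vs] vs(1) by simp
  have VtV: "V\<^sup>T * V = 1\<^sub>m k" unfolding V_def using orthonormal_mat_of_cols[OF vs(2)] vs(1) by simp
  have VVt: "V * V\<^sup>T = 1\<^sub>m k" using mat_mult_left_right_inverse[OF _ V VtV] V by simp
  have expand: "x \<bullet> y = (\<Sum>i<k. (vs ! i \<bullet> x) * (vs ! i \<bullet> y))" if y: "y \<in> carrier_vec k" for y
  proof -
    have "x \<bullet> y = (V\<^sup>T *\<^sub>v x) \<bullet> (V\<^sup>T *\<^sub>v y)" by (rule orthogonal_mat_scalar_prod[OF V VVt x y, symmetric])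
    also have "\<dots> = (\<Sum>i<k. (V\<^sup>T *\<^sub>v x) $ i * (V\<^sup>T *\<^sub>v y) $ i)"
      using V by (simp add: scalar_prod_def atLeast0LessThan)
    finally show ?thesis
      unfolding V_def using transpose_mat_of_cols_mult_vec[OF vs_carrier] x y vs(1) by simp
  qed
  show "x \<bullet> x = (\<Sum>i<k. (vs ! i \<bullet> x)\<^sup>2)" using expand[OF x] by (simp add: power2_eq_square)
  have "vs ! i \<bullet> (M *\<^sub>v x) = es ! i * (vs ! i \<bullet> x)" if "i < k" for i
    using symmetric_mat_eigenvector_scalar_prod[OF M sym _ _ x] eig vs_carrier vs(1) that nth_mem
    by blast
  then show "x \<bullet> (M *\<^sub>v x) = (\<Sum>i<k. es ! i * (vs ! i \<bullet> x)\<^sup>2)"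
    using expand[of "M *\<^sub>v x"] M x by (simp add: power2_eq_square ac_simps)
qed

lemma orthonormal_eigenbasis_char_poly:
  fixes M :: "real mat"
  assumes M: "M \<in> carrier_mat k k" and vs: "length vs = k" "length es = k" "orthonormal k vs"
    and eig: "\<forall>i<k. M *\<^sub>v vs ! i = es ! i \<cdot>\<^sub>v vs ! i"
  shows "char_poly M = (\<Prod>e\<leftarrow>es. [:-e, 1:])"
proof -
  have vs_carrier: "vs ! i \<in> carrier_vec k" if "i < k" for i
    using vs that nth_mem unfolding orthonormal_def by blast
  define V where "V = mat_of_cols k vs"
  have V: "V \<in> carrier_mat k k" unfolding V_def using mat_of_cols_carrier(1)[of k vs] vs(1) by simp
  have VtV: "V\<^sup>T * V = 1\<^sub>m k" unfolding V_def using orthonormal_mat_of_cols[OF vs(3)] vs(1) by simp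
  have VVt: "V * V\<^sup>T = 1\<^sub>m k" using mat_mult_left_right_inverse[OF _ V VtV] V by simp
  define D where "D = V\<^sup>T * M * V"
  have D: "D \<in> carrier_mat k k" unfolding D_def using V M by simp
  have D_index: "D $$ (i, j) = (if i = j then es ! i else 0)" if "i < k" "j < k" for i j
  proof -
    have "D = V\<^sup>T * (M * V)" unfolding D_def using V M by (simp add: assoc_mult_mat[of _ k k _ k _ k])
    moreover have "col (M * V) j = M *\<^sub>v col V j" using that V M by (intro col_mult2) auto
    ultimately have "D $$ (i, j) = col V i \<bullet> (M *\<^sub>v col V j)" using that V M by simp
    then have "D $$ (i, j) = vs ! i \<bullet> (M *\<^sub>v vs ! j)"
      unfolding V_def using that vs vs_carrier by simp
    then show ?thesis
      using that eig vs scalar_prod_smult_distrib[OF vs_carrier[OF that(1)] vs_carrier[OF that(2)]]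
      unfolding orthonormal_def by simp
  qed
  have "similar_mat M D"
  proof -
    have "V * D * V\<^sup>T = (V * V\<^sup>T) * M * (V * V\<^sup>T)"
      unfolding D_def using V M by (simp add: assoc_mult_mat[of _ k k _ k _ k])
    then have "M = V * D * V\<^sup>T" using VVt M by simp
    then show ?thesis unfolding similar_mat_def similar_mat_wit_def using M D V VVt VtV
      by (intro exI[of _ V] exI[of _ "V\<^sup>T"]) auto
  qed
  moreover have "upper_triangular D" "diag_mat D = es"
    using D D_index vs(2) by (auto simp: upper_triangular_def diag_mat_def intro!: nth_equalityI)
  ultimately show ?thesis using char_poly_similar char_poly_upper_triangular[OF D] by metis
qed

lemma symmetric_mat_spectral:
  fixes M :: "real mat"
  assumes M: "M \<in> carrier_mat k k" and sym: "M\<^sup>T = M"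
  shows "\<exists>vs es. length vs = k \<and> length es = k \<and> orthonormal k vs \<and>
           (\<forall>i<k. M *\<^sub>v vs ! i = es ! i \<cdot>\<^sub>v vs ! i) \<and> mset es = proots (char_poly M)"
proof -
  obtain vs es where vs: "length vs = k" "length es = k" "orthonormal k vs"
    and eig: "\<forall>i<k. M *\<^sub>v vs ! i = es ! i \<cdot>\<^sub>v vs ! i"
    using symmetric_mat_orthonormal_eigenvectors[OF M sym, of k] by auto
  then show ?thesis
    using orthonormal_eigenbasis_char_poly[OF M vs eig] by (auto simp: proots_prod_linear_factors)
qed

lemma symmetric_mat_spectral_sorted:
  fixes M :: "real mat"
  assumes M: "M \<in> carrier_mat k k" and sym: "M\<^sup>T = M"
  shows "\<exists>vs es. length vs = k \<and> length es = k \<and> orthonormal k vs \<and>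
           (\<forall>i<k. M *\<^sub>v vs ! i = es ! i \<cdot>\<^sub>v vs ! i) \<and> sorted_eigenvalues M = es"
proof -
  obtain vs es where vs: "length vs = k" "length es = k" "orthonormal k vs"
    and eig: "\<forall>i<k. M *\<^sub>v vs ! i = es ! i \<cdot>\<^sub>v vs ! i" and es: "mset es = proots (char_poly M)"
    using symmetric_mat_spectral[OF M sym] by blast
  obtain p where p: "p permutes {..<k}" "permute_list p es = sort es"
    using mset_eq_permutation[of "sort es" es] vs(2) by auto
  have p_less: "p i < k" if "i < k" for i using permutes_in_image[OF p(1)] that by simp
  have p_eq: "p i = p j \<longleftrightarrow> i = j" for i j using permutes_inj[OF p(1)] by (auto dest: injD)
  have nth_perm: "permute_list p xs ! i = xs ! p i" if "length xs = k" "i < k" for xs :: "'a list" and i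
    using permute_list_nth[of p xs i] p(1) that by simp
  show ?thesis
  proof (intro exI conjI)
    show "orthonormal k (permute_list p vs)"
      using vs(1,3) p(1) p_less p_eq unfolding orthonormal_def by (simp add: nth_perm)
    show "\<forall>i<k. M *\<^sub>v permute_list p vs ! i = sort es ! i \<cdot>\<^sub>v permute_list p vs ! i"
      using eig p_less vs(1,2) by (simp flip: p(2) add: nth_perm)
    show "sorted_eigenvalues M = sort es"
      unfolding sorted_eigenvalues_def es[symmetric] by simp
  qed (use vs in simp_all)
qed

lemma orthonormal_pair_quadratic_form:
  fixes M :: "real mat" and a0 a1 :: real
  assumes M: "M \<in> carrier_mat k k" and v: "v0 \<in> carrier_vec k" "v1 \<in> carrier_vec k"
    and on: "v0 \<bullet> v0 = 1" "v1 \<bullet> v1 = 1" "v0 \<bullet> v1 = 0"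
    and eig: "M *\<^sub>v v0 = e0 \<cdot>\<^sub>v v0" "M *\<^sub>v v1 = e1 \<cdot>\<^sub>v v1"
  defines "u \<equiv> a0 \<cdot>\<^sub>v v0 + a1 \<cdot>\<^sub>v v1"
  shows "u \<bullet> u = a0\<^sup>2 + a1\<^sup>2" and "u \<bullet> (M *\<^sub>v u) = e0 * a0\<^sup>2 + e1 * a1\<^sup>2"
proof -
  have on': "v1 \<bullet> v0 = 0" using on(3) comm_scalar_prod[OF v] by simp
  have "M *\<^sub>v u = (a0 * e0) \<cdot>\<^sub>v v0 + (a1 * e1) \<cdot>\<^sub>v v1"
    unfolding u_def using M v eig by (simp add: mult_add_distrib_mat_vec mult_mat_vec smult_smult_assoc)
  then show "u \<bullet> (M *\<^sub>v u) = e0 * a0\<^sup>2 + e1 * a1\<^sup>2" "u \<bullet> u = a0\<^sup>2 + a1\<^sup>2"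
    unfolding u_def using v on on'
    by (simp_all add: add_scalar_prod_distrib[of _ k] scalar_prod_add_distrib[of _ k] power2_eq_square)
qed

lemma lambda2_rayleigh_lower:
  fixes M :: "real mat"
  assumes M: "M \<in> carrier_mat k k" and sym: "M\<^sup>T = M" and k: "0 < k"
  shows "\<exists>v0\<in>carrier_vec k. \<forall>z\<in>carrier_vec k. v0 \<bullet> z = 0 \<longrightarrow> lambda2 M * (z \<bullet> z) \<le> z \<bullet> (M *\<^sub>v z)"
proof -
  obtain vs es where vs: "length vs = k" "length es = k" "orthonormal k vs"
    and eig: "\<forall>i<k. M *\<^sub>v vs ! i = es ! i \<cdot>\<^sub>v vs ! i" and es: "sorted_eigenvalues M = es"
    using symmetric_mat_spectral_sorted[OF M sym] by blast
  have "lambda2 M \<le> es ! i" if "0 < i" "i < k" for i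
    using es vs(2) that sorted_nth_mono[of es 1 i] sorted_sorted_list_of_multiset
    unfolding lambda2_def sorted_eigenvalues_def by (metis One_nat_def Suc_leI)
  then have coeff_le: "lambda2 M * (vs ! i \<bullet> z)\<^sup>2 \<le> es ! i * (vs ! i \<bullet> z)\<^sup>2"
    if "i < k" "vs ! 0 \<bullet> z = 0" for i z
    using that by (cases "i = 0") (auto intro: mult_right_mono)
  show ?thesis
  proof (intro bexI ballI impI)
    fix z assume z: "z \<in> carrier_vec k" and orth: "vs ! 0 \<bullet> z = 0"
    have "lambda2 M * (z \<bullet> z) = (\<Sum>i<k. lambda2 M * (vs ! i \<bullet> z)\<^sup>2)"
      using orthonormal_basis_quadratic_form(1)[OF M sym vs(1,3) eig z] by (simp add: sum_distrib_left)
    also have "\<dots> \<le> (\<Sum>i<k. es ! i * (vs ! i \<bullet> z)\<^sup>2)"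
      using coeff_le[OF _ orth] by (intro sum_mono) simp
    also have "\<dots> = z \<bullet> (M *\<^sub>v z)"
      using orthonormal_basis_quadratic_form(2)[OF M sym vs(1,3) eig z] by simp
    finally show "lambda2 M * (z \<bullet> z) \<le> z \<bullet> (M *\<^sub>v z)" .
  qed (use vs k nth_mem in \<open>auto simp: orthonormal_def\<close>)
qed

lemma lambda2_rayleigh_upper:
  fixes M :: "real mat"
  assumes M: "M \<in> carrier_mat k k" and sym: "M\<^sup>T = M" and k: "2 \<le> k" and g: "g \<in> carrier_vec k"
  shows "\<exists>u\<in>carrier_vec k. u \<noteq> 0\<^sub>v k \<and> g \<bullet> u = 0 \<and> u \<bullet> (M *\<^sub>v u) \<le> lambda2 M * (u \<bullet> u)"
proof -
  obtain vs es where vs: "length vs = k" "length es = k" "orthonormal k vs"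
    and eig: "\<forall>i<k. M *\<^sub>v vs ! i = es ! i \<cdot>\<^sub>v vs ! i" and es: "sorted_eigenvalues M = es"
    using symmetric_mat_spectral_sorted[OF M sym] by blast
  have l2: "lambda2 M = es ! 1" unfolding lambda2_def es ..
  have "es ! 0 \<le> es ! 1"
    using es vs(2) k sorted_nth_mono[of es 0 1] sorted_sorted_list_of_multiset
    unfolding sorted_eigenvalues_def by fastforce
  define v0 v1 where "v0 = vs ! 0" and "v1 = vs ! 1"
  have "vs ! i \<in> carrier_vec k" if "i < k" for i using vs that nth_mem unfolding orthonormal_def by blast
  then have v: "v0 \<in> carrier_vec k" "v1 \<in> carrier_vec k" "v0 \<bullet> v0 = 1" "v1 \<bullet> v1 = 1" "v0 \<bullet> v1 = 0"
    using vs k unfolding v0_def v1_def orthonormal_def by auto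
  \<comment> \<open>(a0, a1) is a nonzero vector orthogonal to (g \<bullet> v0, g \<bullet> v1)\<close>
  define a0 where "a0 = (if g \<bullet> v0 = 0 \<and> g \<bullet> v1 = 0 then 1 else g \<bullet> v1)"
  define a1 where "a1 = - (g \<bullet> v0)"
  define u where "u = a0 \<cdot>\<^sub>v v0 + a1 \<cdot>\<^sub>v v1"
  note quad = orthonormal_pair_quadratic_form[OF M v, of "es ! 0" "es ! 1" a0 a1, folded u_def]
  have u: "u \<in> carrier_vec k" unfolding u_def using v by simp
  have "g \<bullet> u = a0 * (g \<bullet> v0) + a1 * (g \<bullet> v1)"
    unfolding u_def using g v by (simp add: scalar_prod_add_distrib[of _ k])
  then have "g \<bullet> u = 0" unfolding a0_def a1_def by auto
  moreover have "u \<bullet> u > 0"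
    using quad eig k unfolding v0_def v1_def a0_def a1_def by (auto simp: sum_power2_gt_zero_iff)
  then have "u \<noteq> 0\<^sub>v k" by auto
  moreover have "u \<bullet> (M *\<^sub>v u) \<le> lambda2 M * (u \<bullet> u)"
    using quad eig k \<open>es ! 0 \<le> es ! 1\<close> unfolding l2 v0_def v1_def
    by (simp add: distrib_left mult_right_mono)
  ultimately show ?thesis using u by blast
qed

section \<open>Selection matrices and submatrices\<close>

definition selection_mat :: "nat \<Rightarrow> nat set \<Rightarrow> 'a :: semiring_1 mat" where
  "selection_mat n S = mat n (card S) (\<lambda>(i, a). of_bool (i = pick S a))"

lemma selection_mat_carrier[simp]: "selection_mat n S \<in> carrier_mat n (card S)"
  unfolding selection_mat_def by simp

lemma selection_mat_dims[simp]: "dim_row (selection_mat n S) = n" "dim_col (selection_mat n S) = card S"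
  unfolding selection_mat_def by simp_all

lemma pick_eq_iff: "a < card S \<Longrightarrow> b < card S \<Longrightarrow> pick S a = pick S b \<longleftrightarrow> a = b"
  using pick_mono[of a S b] pick_mono[of b S a] by (cases a b rule: linorder_cases) auto

lemma pick_less: "S \<subseteq> {0..<n} \<Longrightarrow> a < card S \<Longrightarrow> pick S a < n"
  using pick_in_set[of a S] by auto

lemma bij_betw_pick:
  assumes "finite S"
  shows "bij_betw (pick S) {..<card S} S"
proof -
  have inj: "inj_on (pick S) {..<card S}" using pick_eq_iff by (auto intro: inj_onI)
  moreover have "pick S ` {..<card S} \<subseteq> S" using pick_in_set by auto
  moreover have "card (pick S ` {..<card S}) = card S" using card_image[OF inj] by simp
  ultimately show ?thesis using card_subset_eq[OF assms] unfolding bij_betw_def by blast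
qed

lemma submatrix_subset_carrier:
  assumes "A \<in> carrier_mat n m" "I \<subseteq> {0..<n}" "J \<subseteq> {0..<m}"
  shows "submatrix A I J \<in> carrier_mat (card I) (card J)"
proof -
  have "{i. i < n \<and> i \<in> I} = I" "{j. j < m \<and> j \<in> J} = J" using assms(2,3) by auto
  then show ?thesis using assms(1) by (intro carrier_matI) (simp_all add: dim_submatrix)
qed

lemma submatrix_subset_index:
  assumes "A \<in> carrier_mat n m" "I \<subseteq> {0..<n}" "J \<subseteq> {0..<m}" "a < card I" "b < card J"
  shows "submatrix A I J $$ (a, b) = A $$ (pick I a, pick J b)"
proof -
  have "{i. i < n \<and> i \<in> I} = I" "{j. j < m \<and> j \<in> J} = J" using assms(2,3) by auto
  then show ?thesis using assms by (simp add: submatrix_index)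
qed

lemma submatrix_eq_selection_mat:
  fixes A :: "'a :: comm_ring_1 mat"
  assumes A: "A \<in> carrier_mat n m" and I: "I \<subseteq> {0..<n}" and J: "J \<subseteq> {0..<m}"
  shows "submatrix A I J = (selection_mat n I)\<^sup>T * A * selection_mat m J"
proof (rule eq_matI)
  fix a b assume "a < dim_row ((selection_mat n I)\<^sup>T * A * selection_mat m J)"
    and "b < dim_col ((selection_mat n I)\<^sup>T * A * selection_mat m J)"
  then have a: "a < card I" and b: "b < card J" by auto
  have "((selection_mat n I)\<^sup>T * A * selection_mat m J) $$ (a, b)
      = (\<Sum>j<m. (\<Sum>i<n. of_bool (i = pick I a) * A $$ (i, j)) * of_bool (j = pick J b))"
    using a b A by (simp add: selection_mat_def scalar_prod_def atLeast0LessThan)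
  also have "\<dots> = A $$ (pick I a, pick J b)"
    using pick_less[OF I a] pick_less[OF J b] by simp
  finally show "submatrix A I J $$ (a, b) = ((selection_mat n I)\<^sup>T * A * selection_mat m J) $$ (a, b)"
    using submatrix_subset_index[OF A I J a b] by simp
qed (use submatrix_subset_carrier[OF assms] in auto)

lemma selection_mat_mult_vec_pick:
  fixes y :: "'a :: semiring_1 vec"
  assumes "y \<in> carrier_vec (card S)" "a < card S" "S \<subseteq> {0..<n}"
  shows "(selection_mat n S *\<^sub>v y) $ pick S a = y $ a"
proof -
  have "(selection_mat n S *\<^sub>v y) $ pick S a = (\<Sum>b<card S. of_bool (b = a) * y $ b)"
    using assms pick_less[OF assms(3,2)] pick_eq_iff[OF assms(2)]
    by (auto simp: selection_mat_def scalar_prod_def atLeast0LessThan intro!: sum.cong)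
  then show ?thesis using assms(2) by simp
qed

lemma selection_mat_mult_vec_outside:
  fixes y :: "'a :: semiring_1 vec"
  assumes "y \<in> carrier_vec (card S)" "i < n" "i \<notin> S"
  shows "(selection_mat n S *\<^sub>v y) $ i = 0"
proof -
  have "i \<noteq> pick S a" if "a < card S" for a using pick_in_set[of a S] that assms(3) by auto
  then show ?thesis using assms(1,2) by (simp add: selection_mat_def scalar_prod_def)
qed

lemma scalar_prod_self_ge_restriction:
  fixes t u :: "real vec"
  assumes t: "t \<in> carrier_vec n" and u: "u \<in> carrier_vec (card S)" and S: "S \<subseteq> {0..<n}"
    and restr: "\<And>a. a < card S \<Longrightarrow> t $ pick S a = u $ a"
  shows "u \<bullet> u \<le> t \<bullet> t"
proof -
  have fin: "finite S" using S finite_subset by blast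
  have "u \<bullet> u = (\<Sum>a<card S. (t $ pick S a)\<^sup>2)"
    using u restr by (simp add: scalar_prod_def atLeast0LessThan power2_eq_square)
  also have "\<dots> = (\<Sum>i\<in>S. (t $ i)\<^sup>2)" using sum.reindex_bij_betw[OF bij_betw_pick[OF fin]] by simp
  also have "\<dots> \<le> (\<Sum>i<n. (t $ i)\<^sup>2)" using S by (intro sum_mono2) auto
  also have "\<dots> = t \<bullet> t" using t by (simp add: scalar_prod_def atLeast0LessThan power2_eq_square)
  finally show ?thesis .
qed

lemma submatrix_symmetric:
  assumes A: "A \<in> carrier_mat n n" and sym: "A\<^sup>T = A" and I: "I \<subseteq> {0..<n}"
  shows "(submatrix A I I)\<^sup>T = submatrix A I I"
proof -
  have "A $$ (i, j) = A $$ (j, i)" if "i < n" "j < n" for i j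
    using sym A that by (metis carrier_matD index_transpose_mat(1))
  then show ?thesis
    using submatrix_subset_carrier[OF A I I] pick_less[OF I]
    by (intro eq_matI) (auto simp: submatrix_subset_index[OF A I I])
qed

section \<open>Graph Laplacians\<close>

lemma degree_mat_carrier[simp]: "degree_mat n w \<in> carrier_mat n n"
  unfolding degree_mat_def by simp

lemma laplacian_carrier[simp]: "laplacian n w \<in> carrier_mat n n"
  unfolding laplacian_def degree_mat_def by simp

lemma laplacian_dims[simp]: "dim_row (laplacian n w) = n" "dim_col (laplacian n w) = n"
  unfolding laplacian_def degree_mat_def by simp_all

lemma degree_mat_index: "i < n \<Longrightarrow> j < n \<Longrightarrow> degree_mat n w $$ (i, j) = (if i = j then wdeg n w i else 0)"
  unfolding degree_mat_def by simp

lemma laplacian_index: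
  "i < n \<Longrightarrow> j < n \<Longrightarrow> laplacian n w $$ (i, j) = (if i = j then wdeg n w i else 0) - w i j"
  unfolding laplacian_def degree_mat_def by simp

lemma laplacian_symmetric: "weighted_graph n w \<Longrightarrow> (laplacian n w)\<^sup>T = laplacian n w"
  by (rule eq_matI) (auto simp: laplacian_index weighted_graph_def)

lemma laplacian_mult_vec:
  assumes z: "z \<in> carrier_vec n" and i: "i < n"
  shows "(laplacian n w *\<^sub>v z) $ i = (\<Sum>j<n. w i j * (z $ i - z $ j))"
proof -
  have "(laplacian n w *\<^sub>v z) $ i = (\<Sum>j<n. laplacian n w $$ (i, j) * z $ j)"
    using z i by (simp add: scalar_prod_def atLeast0LessThan)
  also have "\<dots> = (\<Sum>j<n. of_bool (j = i) * (wdeg n w i * z $ i) - w i j * z $ j)"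
    using i by (intro sum.cong refl) (auto simp: laplacian_index left_diff_distrib)
  also have "\<dots> = (\<Sum>j<n. w i j * (z $ i - z $ j))"
    using i by (simp add: sum_subtractf wdeg_def sum_distrib_right right_diff_distrib)
  finally show ?thesis .
qed

lemma laplacian_quadratic_form:
  assumes wg: "weighted_graph n w" and z: "z \<in> carrier_vec n"
  shows "2 * (z \<bullet> (laplacian n w *\<^sub>v z)) = (\<Sum>i<n. \<Sum>j<n. w i j * (z $ i - z $ j)\<^sup>2)"
proof -
  have "z \<bullet> (laplacian n w *\<^sub>v z) = (\<Sum>i<n. z $ i * (laplacian n w *\<^sub>v z) $ i)"
    using z by (simp add: scalar_prod_def atLeast0LessThan)
  also have "\<dots> = (\<Sum>i<n. \<Sum>j<n. w i j * z $ i * (z $ i - z $ j))"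
    using z by (simp add: laplacian_mult_vec sum_distrib_left ac_simps del: index_mult_mat_vec)
  finally have q: "z \<bullet> (laplacian n w *\<^sub>v z) = (\<Sum>i<n. \<Sum>j<n. w i j * z $ i * (z $ i - z $ j))" .
  also have "\<dots> = (\<Sum>j<n. \<Sum>i<n. w i j * z $ i * (z $ i - z $ j))" by (rule sum.swap)
  also have "\<dots> = (\<Sum>i<n. \<Sum>j<n. w i j * z $ j * (z $ j - z $ i))"
    using wg by (auto simp: weighted_graph_def intro!: sum.cong)
  finally have "2 * (z \<bullet> (laplacian n w *\<^sub>v z))
      = (\<Sum>i<n. \<Sum>j<n. w i j * z $ i * (z $ i - z $ j)) + (\<Sum>i<n. \<Sum>j<n. w i j * z $ j * (z $ j - z $ i))"
    using q by simp
  also have "\<dots> = (\<Sum>i<n. \<Sum>j<n. w i j * (z $ i - z $ j)\<^sup>2)"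
    by (simp add: sum.distrib[symmetric] power2_eq_square algebra_simps)
  finally show ?thesis .
qed

lemma laplacian_psd:
  assumes "weighted_graph n w" "z \<in> carrier_vec n"
  shows "z \<bullet> (laplacian n w *\<^sub>v z) \<ge> 0"
proof -
  have "(\<Sum>i<n. \<Sum>j<n. w i j * (z $ i - z $ j)\<^sup>2) \<ge> 0"
    using assms(1) by (intro sum_nonneg) (auto simp: weighted_graph_def)
  then show ?thesis using laplacian_quadratic_form[OF assms] by simp
qed

lemma laplacian_kernel_constant:
  assumes wg: "weighted_graph n w" and con: "graph_connected n w" and z: "z \<in> carrier_vec n"
    and q: "z \<bullet> (laplacian n w *\<^sub>v z) = 0" and u: "u < n" and v: "v < n"
  shows "z $ u = z $ v"
proof -
  have nonneg: "0 \<le> w i j * (z $ i - z $ j)\<^sup>2" if "i < n" "j < n" for i j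
    using wg that by (auto simp: weighted_graph_def)
  have "(\<Sum>i<n. \<Sum>j<n. w i j * (z $ i - z $ j)\<^sup>2) = 0" using laplacian_quadratic_form[OF wg z] q by simp
  then have "(\<Sum>j<n. w i j * (z $ i - z $ j)\<^sup>2) = 0" if "i < n" for i
    using that nonneg by (subst (asm) sum_nonneg_eq_0_iff) (auto intro: sum_nonneg)
  then have zero_terms: "w i j * (z $ i - z $ j)\<^sup>2 = 0" if "i < n" "j < n" for i j
    using that nonneg sum_nonneg_eq_0_iff[of "{..<n}" "\<lambda>j. w i j * (z $ i - z $ j)\<^sup>2"] by simp
  have edge: "z $ i = z $ j" if "i < n" "j < n" "w i j > 0" for i j
    using that zero_terms[of i j] by auto
  have "(u, v) \<in> {(i, j). i < n \<and> j < n \<and> w i j > 0}\<^sup>*"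
    using con u v unfolding graph_connected_def by blast
  then show ?thesis by (induction rule: rtrancl_induct) (use edge in fastforce)+
qed

lemma wdeg_pos_if_connected:
  assumes wg: "weighted_graph n w" and con: "graph_connected n w" and n: "2 \<le> n" and i: "i < n"
  shows "wdeg n w i > 0"
proof -
  define j :: nat where "j = (if i = 0 then 1 else 0)"
  have j: "j < n" "j \<noteq> i" unfolding j_def using n by auto
  have "(i, j) \<in> {(i, j). i < n \<and> j < n \<and> w i j > 0}\<^sup>*"
    using con i j unfolding graph_connected_def by blast
  then obtain k where k: "k < n" "w i k > 0" using j(2) by (cases rule: converse_rtranclE) auto
  moreover have "w i k \<le> (\<Sum>j<n. w i j)"
    using wg i k by (intro member_le_sum) (auto simp: weighted_graph_def)
  ultimately show ?thesis unfolding wdeg_def by linarith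
qed

lemma diag_inv_sqrt_carrier: "D \<in> carrier_mat n n \<Longrightarrow> diag_inv_sqrt D \<in> carrier_mat n n"
  unfolding diag_inv_sqrt_def by simp

lemma diag_inv_sqrt_symmetric: "D \<in> carrier_mat n n \<Longrightarrow> (diag_inv_sqrt D)\<^sup>T = diag_inv_sqrt D"
  by (rule eq_matI) (auto simp: diag_inv_sqrt_def)

lemma diag_inv_sqrt_mult_vec:
  assumes "D \<in> carrier_mat n n" "v \<in> carrier_vec n" "i < n"
  shows "(diag_inv_sqrt D *\<^sub>v v) $ i = v $ i / sqrt (D $$ (i, i))"
  using assms diagonal_mat_mult_vec[of v n i "\<lambda>i. 1 / sqrt (D $$ (i, i))"] unfolding diag_inv_sqrt_def by simp

lemma laplacian_block_invertible:
  assumes wg: "weighted_graph n w" and con: "graph_connected n w"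
    and C: "C \<subseteq> {0..<n}" and C_ne: "C \<noteq> {}"
  shows "mat_inverse (submatrix (laplacian n w) ({0..<n} - C) ({0..<n} - C)) \<noteq> None"
proof -
  define F where "F = {0..<n} - C"
  have F: "F \<subseteq> {0..<n}" unfolding F_def by auto
  have "y = 0\<^sub>v (card F)"
    if y: "y \<in> carrier_vec (card F)" and Ly: "submatrix (laplacian n w) F F *\<^sub>v y = 0\<^sub>v (card F)" for y
  proof -
    define z where "z = selection_mat n F *\<^sub>v y"
    have z: "z \<in> carrier_vec n" unfolding z_def using mult_mat_vec_carrier[OF selection_mat_carrier y] .
    have "z \<bullet> (laplacian n w *\<^sub>v z) = y \<bullet> (submatrix (laplacian n w) F F *\<^sub>v y)"
      unfolding z_def submatrix_eq_selection_mat[OF laplacian_carrier F F]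
      using scalar_prod_transpose_mult_mult_vec[OF laplacian_carrier selection_mat_carrier selection_mat_carrier y y]
      by simp
    then have "z \<bullet> (laplacian n w *\<^sub>v z) = 0" using Ly y by simp
    note z_constant = laplacian_kernel_constant[OF wg con z this]
    obtain c where c: "c \<in> C" using C_ne by blast
    then have "c < n" "z $ c = 0"
      using C selection_mat_mult_vec_outside[OF y, of c n] unfolding z_def F_def by auto
    show ?thesis
    proof (rule eq_vecI)
      fix a assume "a < dim_vec (0\<^sub>v (card F) :: real vec)"
      then have a: "a < card F" by simp
      have "y $ a = z $ pick F a" unfolding z_def using selection_mat_mult_vec_pick[OF y a F] by simp
      also have "\<dots> = z $ c" using z_constant[OF pick_less[OF F a] \<open>c < n\<close>] .
      finally show "y $ a = 0\<^sub>v (card F) $ a" using \<open>z $ c = 0\<close> a by simp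
    qed (use y in simp)
  qed
  then show ?thesis
    unfolding F_def[symmetric] by (intro mat_inverse_if_trivial_kernel[OF submatrix_subset_carrier[OF laplacian_carrier F F]])
qed

section \<open>Schur complements and harmonic extension\<close>

locale schur_split =
  fixes L :: "real mat" and n :: nat and C :: "nat set"
  assumes L: "L \<in> carrier_mat n n" and L_symmetric: "L\<^sup>T = L" and C: "C \<subseteq> {0..<n}"
    and LFF_invertible: "mat_inverse (submatrix L ({0..<n} - C) ({0..<n} - C)) \<noteq> None"
begin

abbreviation "F \<equiv> {0..<n} - C"

abbreviation "LFF \<equiv> submatrix L F F"

abbreviation "LFC \<equiv> submatrix L F C"

abbreviation "LCC \<equiv> submatrix L C C"

definition "LFF_inv = the (mat_inverse LFF)"

lemma F_subset: "F \<subseteq> {0..<n}" by auto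

lemma LFF_carrier: "LFF \<in> carrier_mat (card F) (card F)"
  by (rule submatrix_subset_carrier[OF L F_subset F_subset])

lemma LFC_carrier: "LFC \<in> carrier_mat (card F) (card C)"
  by (rule submatrix_subset_carrier[OF L F_subset C])

lemma LCC_carrier: "LCC \<in> carrier_mat (card C) (card C)"
  by (rule submatrix_subset_carrier[OF L C C])

lemma LFF_inv: "LFF * LFF_inv = 1\<^sub>m (card F)" "LFF_inv \<in> carrier_mat (card F) (card F)"
  using LFF_invertible mat_inverse(2)[OF LFF_carrier] unfolding LFF_inv_def by auto

lemma LFF_inv_LFC_carrier: "LFF_inv * LFC \<in> carrier_mat (card F) (card C)"
  by (rule mult_carrier_mat[OF LFF_inv(2) LFC_carrier])

lemma LFF_inv_symmetric: "LFF_inv\<^sup>T = LFF_inv"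
  by (rule inverse_of_symmetric_mat[OF LFF_carrier submatrix_symmetric[OF L L_symmetric F_subset] LFF_inv(2,1)])

lemma schur_compl_eq: "schur_compl L C = LCC - LFC\<^sup>T * LFF_inv * LFC"
  unfolding schur_compl_def LFF_inv_def Let_def using L by simp

lemma schur_compl_carrier: "schur_compl L C \<in> carrier_mat (card C) (card C)"
  unfolding schur_compl_eq using LFF_inv(2) LFC_carrier by simp

lemma schur_compl_symmetric: "(schur_compl L C)\<^sup>T = schur_compl L C"
proof -
  have "(LFC\<^sup>T * (LFF_inv * LFC))\<^sup>T = (LFF_inv * LFC)\<^sup>T * LFC"
    using transpose_mult[OF _ LFF_inv_LFC_carrier, of "LFC\<^sup>T"] LFC_carrier by simp
  also have "(LFF_inv * LFC)\<^sup>T = LFC\<^sup>T * LFF_inv"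
    using transpose_mult[OF LFF_inv(2) LFC_carrier] LFF_inv_symmetric by simp
  finally have "(LFC\<^sup>T * LFF_inv * LFC)\<^sup>T = LFC\<^sup>T * LFF_inv * LFC"
    using LFC_carrier LFF_inv(2) by (simp add: assoc_mult_mat[of _ "card C" "card F" _ "card F" _ "card C"])
  then show ?thesis
    unfolding schur_compl_eq using LCC_carrier LFC_carrier LFF_inv(2) submatrix_symmetric[OF L L_symmetric C]
    by (simp add: transpose_minus[of _ "card C" "card C"])
qed

definition harmonic_extension :: "real mat" where
  "harmonic_extension = selection_mat n C - selection_mat n F * (LFF_inv * LFC)"

lemma harmonic_extension_carrier: "harmonic_extension \<in> carrier_mat n (card C)"
  unfolding harmonic_extension_def
  using mult_carrier_mat[OF selection_mat_carrier LFF_inv_LFC_carrier] by simp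

lemma harmonic_extension_mult_vec:
  assumes x: "x \<in> carrier_vec (card C)"
  shows "harmonic_extension *\<^sub>v x = selection_mat n C *\<^sub>v x - selection_mat n F *\<^sub>v (LFF_inv *\<^sub>v (LFC *\<^sub>v x))"
proof -
  have FB: "selection_mat n F * (LFF_inv * LFC) \<in> carrier_mat n (card C)"
    by (rule mult_carrier_mat[OF selection_mat_carrier LFF_inv_LFC_carrier])
  have "harmonic_extension *\<^sub>v x = selection_mat n C *\<^sub>v x - (selection_mat n F * (LFF_inv * LFC)) *\<^sub>v x"
    unfolding harmonic_extension_def using x FB by (intro minus_mult_distrib_mat_vec) auto
  also have "(selection_mat n F * (LFF_inv * LFC)) *\<^sub>v x = selection_mat n F *\<^sub>v (LFF_inv *\<^sub>v (LFC *\<^sub>v x))"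
    using x LFF_inv(2) LFC_carrier selection_mat_carrier
    by (simp add: assoc_mult_mat_vec[of _ n "card F" _ "card C"] assoc_mult_mat_vec[of _ "card F" "card F" _ "card C"])
  finally show ?thesis .
qed

lemma harmonic_extension_pick:
  assumes x: "x \<in> carrier_vec (card C)" and a: "a < card C"
  shows "(harmonic_extension *\<^sub>v x) $ pick C a = x $ a"
proof -
  have p: "pick C a < n" "pick C a \<notin> F" using pick_less[OF C a] pick_in_set[of a C] a by auto
  have y: "LFF_inv *\<^sub>v (LFC *\<^sub>v x) \<in> carrier_vec (card F)" using x LFF_inv(2) LFC_carrier by simp
  show ?thesis
    using harmonic_extension_mult_vec[OF x] selection_mat_mult_vec_pick[OF x a C]
      selection_mat_mult_vec_outside[OF y p] p(1) x y by simp
qed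

text \<open>The quadratic form of the Schur complement is the energy of the harmonic extension:
  since LFF y = LFC x for y = LFF\<inverse> LFC x, the F-block term cancels half of the cross term.\<close>

lemma schur_compl_quadratic_form:
  assumes x: "x \<in> carrier_vec (card C)"
  shows "(harmonic_extension *\<^sub>v x) \<bullet> (L *\<^sub>v (harmonic_extension *\<^sub>v x)) = x \<bullet> (schur_compl L C *\<^sub>v x)"
proof -
  define S where "S = LFC\<^sup>T * LFF_inv * LFC"
  define b where "b = LFC *\<^sub>v x"
  define y where "y = LFF_inv *\<^sub>v b"
  have S: "S \<in> carrier_mat (card C) (card C)"
    unfolding S_def using mult_carrier_mat[OF mult_carrier_mat[OF _ LFF_inv(2)] LFC_carrier] LFC_carrier by simp
  have b: "b \<in> carrier_vec (card F)" unfolding b_def using LFC_carrier x by simp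
  have y: "y \<in> carrier_vec (card F)" unfolding y_def using LFF_inv(2) b by simp
  have "LFF *\<^sub>v y = (LFF * LFF_inv) *\<^sub>v b"
    unfolding y_def using LFF_carrier LFF_inv(2) b by (intro assoc_mult_mat_vec[symmetric]) auto
  then have LFF_y: "LFF *\<^sub>v y = b" using LFF_inv(1) b by simp
  have "harmonic_extension *\<^sub>v x = selection_mat n C *\<^sub>v x - selection_mat n F *\<^sub>v y"
    unfolding y_def b_def by (rule harmonic_extension_mult_vec[OF x])
  then have "(harmonic_extension *\<^sub>v x) \<bullet> (L *\<^sub>v (harmonic_extension *\<^sub>v x))
      = x \<bullet> (((selection_mat n C)\<^sup>T * L * selection_mat n C) *\<^sub>v x)
        - 2 * (y \<bullet> (((selection_mat n F)\<^sup>T * L * selection_mat n C) *\<^sub>v x))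
        + y \<bullet> (((selection_mat n F)\<^sup>T * L * selection_mat n F) *\<^sub>v y)"
    using quadratic_form_diff[OF L L_symmetric selection_mat_carrier selection_mat_carrier x y] by (simp only:)
  also have "\<dots> = x \<bullet> (LCC *\<^sub>v x) - 2 * (y \<bullet> b) + y \<bullet> b"
    by (simp only: submatrix_eq_selection_mat[OF L C C, symmetric] submatrix_eq_selection_mat[OF L F_subset C, symmetric]
        submatrix_eq_selection_mat[OF L F_subset F_subset, symmetric] LFF_y b_def)
  finally have "(harmonic_extension *\<^sub>v x) \<bullet> (L *\<^sub>v (harmonic_extension *\<^sub>v x))
      = x \<bullet> (LCC *\<^sub>v x) - y \<bullet> b" by simp
  moreover have "y \<bullet> b = x \<bullet> (S *\<^sub>v x)"
    using scalar_prod_transpose_mult_mult_vec[OF LFF_inv(2) LFC_carrier LFC_carrier x x] comm_scalar_prod[OF y b]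
    unfolding S_def y_def b_def by simp
  moreover have "schur_compl L C *\<^sub>v x = LCC *\<^sub>v x - S *\<^sub>v x"
    unfolding schur_compl_eq S_def[symmetric] by (rule minus_mult_distrib_mat_vec[OF LCC_carrier S x])
  then have "x \<bullet> (schur_compl L C *\<^sub>v x) = x \<bullet> (LCC *\<^sub>v x) - x \<bullet> (S *\<^sub>v x)"
    using scalar_prod_minus_distrib[OF x mult_mat_vec_carrier[OF LCC_carrier x] mult_mat_vec_carrier[OF S x]]
    by simp
  ultimately show ?thesis by simp
qed

end

section \<open>Comparison of the normalised matrices\<close>

lemma rayleigh_quotient_comparison:
  fixes a t p \<nu> \<mu> :: real
  assumes a: "0 < a" "a \<le> t" and p: "0 \<le> p" "\<nu> * t \<le> p" "p \<le> \<mu> * a"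
  shows "\<nu> \<le> \<mu>"
proof (cases "\<nu> \<le> 0")
  case True
  have "0 \<le> \<mu> * a" using p by linarith
  then have "0 \<le> \<mu>" using a(1) by (simp add: zero_le_mult_iff)
  then show ?thesis using True by linarith
next
  case False
  then have "\<nu> * a \<le> \<nu> * t" using a(2) by (intro mult_left_mono) auto
  then have "\<nu> * a \<le> \<mu> * a" using p by linarith
  then show ?thesis using a(1) by (rule mult_right_le_imp_le)
qed

locale normalized_schur =
  fixes n :: nat and w :: "nat \<Rightarrow> nat \<Rightarrow> real" and C :: "nat set"
  assumes wg: "weighted_graph n w" and con: "graph_connected n w"
    and C_subset: "C \<subseteq> {0..<n}" and card_C: "2 \<le> card C"
begin

sublocale schur_split "laplacian n w" n C
proof
  have "C \<noteq> {}" using card_C by auto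
  then show "mat_inverse (submatrix (laplacian n w) ({0..<n} - C) ({0..<n} - C)) \<noteq> None"
    by (rule laplacian_block_invertible[OF wg con C_subset])
qed (use wg C_subset laplacian_symmetric in auto)

abbreviation "Dh \<equiv> diag_inv_sqrt (degree_mat n w)"

abbreviation "DhC \<equiv> diag_inv_sqrt (submatrix (degree_mat n w) C C)"

abbreviation "N \<equiv> Dh * laplacian n w * Dh"

abbreviation "N_schur \<equiv> DhC * schur_compl (laplacian n w) C * DhC"

lemma two_le_n: "2 \<le> n"
  using card_C card_mono[OF _ C_subset] by fastforce

lemma wdeg_positive: "i < n \<Longrightarrow> 0 < wdeg n w i"
  using wdeg_pos_if_connected[OF wg con two_le_n] .

lemma DC_carrier: "submatrix (degree_mat n w) C C \<in> carrier_mat (card C) (card C)"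
  by (rule submatrix_subset_carrier[OF degree_mat_carrier C_subset C_subset])

lemma DC_diagonal: "a < card C \<Longrightarrow> submatrix (degree_mat n w) C C $$ (a, a) = wdeg n w (pick C a)"
  using pick_less[OF C_subset] by (simp add: submatrix_subset_index[OF degree_mat_carrier C_subset C_subset] degree_mat_index)

lemma Dh_carrier: "Dh \<in> carrier_mat n n" and Dh_symmetric: "Dh\<^sup>T = Dh"
  using diag_inv_sqrt_carrier diag_inv_sqrt_symmetric degree_mat_carrier by blast+

lemma DhC_carrier: "DhC \<in> carrier_mat (card C) (card C)" and DhC_symmetric: "DhC\<^sup>T = DhC"
  using diag_inv_sqrt_carrier diag_inv_sqrt_symmetric DC_carrier by blast+

lemma N_carrier: "N \<in> carrier_mat n n"
  by (rule mult_carrier_mat[OF mult_carrier_mat[OF Dh_carrier laplacian_carrier] Dh_carrier])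

lemma N_schur_carrier: "N_schur \<in> carrier_mat (card C) (card C)"
  by (rule mult_carrier_mat[OF mult_carrier_mat[OF DhC_carrier schur_compl_carrier] DhC_carrier])

lemma N_symmetric: "N\<^sup>T = N"
  by (rule symmetric_congruence[OF laplacian_carrier Dh_carrier laplacian_symmetric[OF wg] Dh_symmetric])

lemma N_schur_symmetric: "N_schur\<^sup>T = N_schur"
  by (rule symmetric_congruence[OF schur_compl_carrier DhC_carrier schur_compl_symmetric DhC_symmetric])

lemma N_quadratic_form: "t \<in> carrier_vec n \<Longrightarrow> t \<bullet> (N *\<^sub>v t) = (Dh *\<^sub>v t) \<bullet> (laplacian n w *\<^sub>v (Dh *\<^sub>v t))"
  using scalar_prod_transpose_mult_mult_vec[OF laplacian_carrier Dh_carrier Dh_carrier] Dh_symmetric by metis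

definition sqrt_degree_mat :: "real mat" where
  "sqrt_degree_mat = mat n n (\<lambda>(i, j). if i = j then sqrt (wdeg n w i) else 0)"

lemma sqrt_degree_mat_carrier: "sqrt_degree_mat \<in> carrier_mat n n"
  unfolding sqrt_degree_mat_def by simp

lemma Dh_sqrt_degree_mat:
  assumes z: "z \<in> carrier_vec n"
  shows "Dh *\<^sub>v (sqrt_degree_mat *\<^sub>v z) = z"
proof (rule eq_vecI)
  fix i assume "i < dim_vec z"
  then have i: "i < n" using z by simp
  then show "(Dh *\<^sub>v (sqrt_degree_mat *\<^sub>v z)) $ i = z $ i"
    using diag_inv_sqrt_mult_vec[OF degree_mat_carrier mult_mat_vec_carrier[OF sqrt_degree_mat_carrier z] i]
      diagonal_mat_mult_vec[OF z i] wdeg_positive[OF i]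
    by (simp add: degree_mat_index sqrt_degree_mat_def)
qed (use z Dh_carrier in simp)

definition lift :: "real mat" where
  "lift = sqrt_degree_mat * harmonic_extension * DhC"

lemma lift_carrier: "lift \<in> carrier_mat n (card C)"
  unfolding lift_def
  by (rule mult_carrier_mat[OF mult_carrier_mat[OF sqrt_degree_mat_carrier harmonic_extension_carrier] DhC_carrier])

lemma lift_mult_vec:
  assumes u: "u \<in> carrier_vec (card C)"
  shows "lift *\<^sub>v u = sqrt_degree_mat *\<^sub>v (harmonic_extension *\<^sub>v (DhC *\<^sub>v u))"
  unfolding lift_def using u sqrt_degree_mat_carrier harmonic_extension_carrier DhC_carrier
  by (simp add: assoc_mult_mat_vec[of _ n n _ "card C"] assoc_mult_mat_vec[of _ n "card C" _ "card C"])

lemma lift_pick: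
  assumes u: "u \<in> carrier_vec (card C)" and a: "a < card C"
  shows "(lift *\<^sub>v u) $ pick C a = u $ a"
proof -
  define x where "x = DhC *\<^sub>v u"
  have x: "x \<in> carrier_vec (card C)" unfolding x_def using DhC_carrier u by simp
  have p: "pick C a < n" by (rule pick_less[OF C_subset a])
  have "(lift *\<^sub>v u) $ pick C a = sqrt (wdeg n w (pick C a)) * x $ a"
    unfolding lift_mult_vec[OF u] x_def[symmetric] sqrt_degree_mat_def
    using diagonal_mat_mult_vec[OF mult_mat_vec_carrier[OF harmonic_extension_carrier x] p]
      harmonic_extension_pick[OF x a] by simp
  also have "x $ a = u $ a / sqrt (wdeg n w (pick C a))"
    unfolding x_def using diag_inv_sqrt_mult_vec[OF DC_carrier u a] DC_diagonal[OF a] by simp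
  finally show ?thesis using wdeg_positive[OF p] by simp
qed

lemma lift_energy:
  assumes u: "u \<in> carrier_vec (card C)"
  shows "(lift *\<^sub>v u) \<bullet> (N *\<^sub>v (lift *\<^sub>v u)) = u \<bullet> (N_schur *\<^sub>v u)"
proof -
  define x where "x = DhC *\<^sub>v u"
  define z where "z = harmonic_extension *\<^sub>v x"
  have x: "x \<in> carrier_vec (card C)" unfolding x_def using DhC_carrier u by simp
  have z: "z \<in> carrier_vec n" unfolding z_def using harmonic_extension_carrier x by simp
  have "lift *\<^sub>v u = sqrt_degree_mat *\<^sub>v z" unfolding z_def x_def by (rule lift_mult_vec[OF u])
  then have "(lift *\<^sub>v u) \<bullet> (N *\<^sub>v (lift *\<^sub>v u)) = z \<bullet> (laplacian n w *\<^sub>v z)"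
    using N_quadratic_form[OF mult_mat_vec_carrier[OF lift_carrier u]] Dh_sqrt_degree_mat[OF z] by simp
  also have "\<dots> = x \<bullet> (schur_compl (laplacian n w) C *\<^sub>v x)"
    unfolding z_def by (rule schur_compl_quadratic_form[OF x])
  also have "\<dots> = u \<bullet> (N_schur *\<^sub>v u)"
    unfolding x_def
    using scalar_prod_transpose_mult_mult_vec[OF schur_compl_carrier DhC_carrier DhC_carrier u u] DhC_symmetric
    by simp
  finally show ?thesis .
qed

lemma lambda2_le_lambda2_schur: "lambda2 N \<le> lambda2 N_schur"
proof -
  obtain v0 where v0: "v0 \<in> carrier_vec n"
    and lower: "\<And>z. z \<in> carrier_vec n \<Longrightarrow> v0 \<bullet> z = 0 \<Longrightarrow> lambda2 N * (z \<bullet> z) \<le> z \<bullet> (N *\<^sub>v z)"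
    using lambda2_rayleigh_lower[OF N_carrier N_symmetric] two_le_n by auto
  obtain u where u: "u \<in> carrier_vec (card C)" "u \<noteq> 0\<^sub>v (card C)" "(lift\<^sup>T *\<^sub>v v0) \<bullet> u = 0"
    and upper: "u \<bullet> (N_schur *\<^sub>v u) \<le> lambda2 N_schur * (u \<bullet> u)"
    using lambda2_rayleigh_upper[OF N_schur_carrier N_schur_symmetric card_C, of "lift\<^sup>T *\<^sub>v v0"]
      lift_carrier v0 by auto
  define t where "t = lift *\<^sub>v u"
  have t: "t \<in> carrier_vec n" unfolding t_def using lift_carrier u(1) by simp
  have "v0 \<bullet> t = 0" unfolding t_def using transpose_vec_mult_scalar[OF lift_carrier u(1) v0] u(3) by simp
  then have lower_t: "lambda2 N * (t \<bullet> t) \<le> t \<bullet> (N *\<^sub>v t)" by (rule lower[OF t])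
  have norm_t: "u \<bullet> u \<le> t \<bullet> t"
    using scalar_prod_self_ge_restriction[OF t u(1) C_subset] lift_pick[OF u(1)] unfolding t_def by blast
  have norm_u: "0 < u \<bullet> u" using u(1,2) conjugate_square_greater_0_vec[OF u(1)] by simp
  have psd: "0 \<le> t \<bullet> (N *\<^sub>v t)" using N_quadratic_form[OF t] laplacian_psd[OF wg] Dh_carrier t by simp
  have "t \<bullet> (N *\<^sub>v t) \<le> lambda2 N_schur * (u \<bullet> u)" using lift_energy[OF u(1)] upper unfolding t_def by simp
  then show ?thesis by (rule rayleigh_quotient_comparison[OF norm_u norm_t psd lower_t])
qed

end

theorem lemma4p3:
  fixes n :: nat and w :: "nat \<Rightarrow> nat \<Rightarrow> real" and C :: "nat set" and \<nu>2 :: real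
  assumes "weighted_graph n w"
    and "graph_connected n w"
    and "\<nu>2 = lambda2 (diag_inv_sqrt (degree_mat n w) * laplacian n w * diag_inv_sqrt (degree_mat n w))"
    and "C \<subseteq> {0..<n}"
    and "{0..<n} - C \<noteq> {}"
    and "card C \<ge> 2"
  shows "lambda2 (diag_inv_sqrt (submatrix (degree_mat n w) C C)
                  * schur_compl (laplacian n w) C
                  * diag_inv_sqrt (submatrix (degree_mat n w) C C)) \<ge> \<nu>2"
proof -
  interpret normalized_schur n w C using assms by unfold_locales auto
  show ?thesis using lambda2_le_lambda2_schur assms(3) by simp
qed

end
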